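(* Let $T$ be a left-invariant symmetric $(0,2)$-tensor field on $G$. If $g$ is a critical point of $S|_{\mathcal M_T^0}$, then $S(g)=0$.
   Context: Let $G$ be a connected non-compact simple Lie group with Lie algebra $\mathfrak g$, $K$ a maximal compact subgroup with Lie algebra $\mathfrak k$, $B$ the Killing form of $\mathfrak g$, and $\mathfrak p$ the $B$-orthogonal complement of $\mathfrak k$ in $\mathfrak g$. Let $Q=B|_{\mathfrak p}-B|_{\mathfrak k}$. Write $\mathfrak k=\mathfrak k_1\oplus\cdots\oplus\mathfrak k_{r+s}$, where $\mathfrak k_1,\dots,\mathfrak k_r$ are the simple ideals of $[\mathfrak k,\mathfrak k]$, $\mathfrak k_{r+1}$ is the centre of $\mathfrak k$, and $s=1$ if the centre is nontrivial, $s=0$ otherwise. Left-invariant tensor fields on $G$ are identified with bilinear forms on $\mathfrak g$; $Q|_{\mathfrak u}$ denotes $Q$ restricted to $\mathfrak u$ and extended by zero on its $Q$-orthogonal complement. $\mathcal M_K$ is the set of left-invariant metrics on $G$ naturally reductive with respect to $G\times K$ (acting by $(x,k)y=xyk^{-1}$), which by a theorem of Gordon are exactly the metrics $\beta Q|_{\mathfrak p}+\sum_i\alpha_iQ|_{\mathfrak k_i}$ with $\beta,\alpha_i>0$; it is a manifold via these parameters. $S$ is the scalar curvature functional, and $\mathcal M_T^0=\{g\in\mathcal M_K:\mathrm{tr}_gT=0\}$ with the induced manifold structure. *)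

theory Defs
  imports "HOL-Analysis.Analysis"
begin

text \<open>Everything is left-invariant, so we work on the Lie algebra g of G,
modelled as a finite-dimensional real vector space 'a (of class euclidean_space;
its built-in inner product is used only as an auxiliary device to compute
basis-independent traces) with a bracket br.\<close>

definition lie_algebra :: "('a::euclidean_space \<Rightarrow> 'a \<Rightarrow> 'a) \<Rightarrow> bool" where
  "lie_algebra br \<longleftrightarrow> bilinear br \<and> (\<forall>x. br x x = 0) \<and>
     (\<forall>x y z. br x (br y z) + br y (br z x) + br z (br x y) = 0)"

definition ltrace :: "('a::euclidean_space \<Rightarrow> 'a) \<Rightarrow> real" where
  "ltrace f = (\<Sum>u\<in>Basis. inner (f u) u)"

definition killing :: "('a::euclidean_space \<Rightarrow> 'a \<Rightarrow> 'a) \<Rightarrow> 'a \<Rightarrow> 'a \<Rightarrow> real" where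
  "killing br x y = ltrace (\<lambda>z. br x (br y z))"

definition lie_ideal_in :: "('a::euclidean_space \<Rightarrow> 'a \<Rightarrow> 'a) \<Rightarrow> 'a set \<Rightarrow> 'a set \<Rightarrow> bool" where
  "lie_ideal_in br L I \<longleftrightarrow> subspace I \<and> I \<subseteq> L \<and> (\<forall>x\<in>L. \<forall>y\<in>I. br x y \<in> I)"

definition lie_subalgebra :: "('a::euclidean_space \<Rightarrow> 'a \<Rightarrow> 'a) \<Rightarrow> 'a set \<Rightarrow> bool" where
  "lie_subalgebra br L \<longleftrightarrow> subspace L \<and> (\<forall>x\<in>L. \<forall>y\<in>L. br x y \<in> L)"

definition simple_lie_algebra :: "('a::euclidean_space \<Rightarrow> 'a \<Rightarrow> 'a) \<Rightarrow> bool" where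
  "simple_lie_algebra br \<longleftrightarrow> lie_algebra br \<and> (\<exists>x y. br x y \<noteq> 0) \<and>
     (\<forall>I. lie_ideal_in br UNIV I \<longrightarrow> I = {0} \<or> I = UNIV)"

text \<open>A simple real Lie algebra is compact iff its Killing form is negative definite.\<close>
definition noncompact_lie_algebra :: "('a::euclidean_space \<Rightarrow> 'a \<Rightarrow> 'a) \<Rightarrow> bool" where
  "noncompact_lie_algebra br \<longleftrightarrow> \<not> (\<forall>x. x \<noteq> 0 \<longrightarrow> killing br x x < 0)"

definition B_orth :: "('a::euclidean_space \<Rightarrow> 'a \<Rightarrow> 'a) \<Rightarrow> 'a set \<Rightarrow> 'a set" where
  "B_orth br K = {y. \<forall>x\<in>K. killing br x y = 0}"

text \<open>k is the Lie algebra of a maximal compact subgroup: g = k + p is a Cartan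
decomposition (B negative definite on k, positive definite on p = k^perp_B).\<close>
definition cartan_subalgebra_k :: "('a::euclidean_space \<Rightarrow> 'a \<Rightarrow> 'a) \<Rightarrow> 'a set \<Rightarrow> bool" where
  "cartan_subalgebra_k br K \<longleftrightarrow> lie_subalgebra br K \<and>
     (\<forall>x\<in>K. x \<noteq> 0 \<longrightarrow> killing br x x < 0) \<and>
     (\<forall>y\<in>B_orth br K. y \<noteq> 0 \<longrightarrow> killing br y y > 0)"

definition derived :: "('a::euclidean_space \<Rightarrow> 'a \<Rightarrow> 'a) \<Rightarrow> 'a set \<Rightarrow> 'a set" where
  "derived br K = span {br x y | x y. x \<in> K \<and> y \<in> K}"

definition lie_centre :: "('a::euclidean_space \<Rightarrow> 'a \<Rightarrow> 'a) \<Rightarrow> 'a set \<Rightarrow> 'a set" where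
  "lie_centre br K = {z\<in>K. \<forall>x\<in>K. br x z = 0}"

definition simple_ideal :: "('a::euclidean_space \<Rightarrow> 'a \<Rightarrow> 'a) \<Rightarrow> 'a set \<Rightarrow> 'a set \<Rightarrow> bool" where
  "simple_ideal br D I \<longleftrightarrow> lie_ideal_in br D I \<and> (\<exists>x\<in>I. \<exists>y\<in>I. br x y \<noteq> 0) \<and>
     (\<forall>J. lie_ideal_in br I J \<longrightarrow> J = {0} \<or> J = I)"

definition k_factors :: "('a::euclidean_space \<Rightarrow> 'a \<Rightarrow> 'a) \<Rightarrow> 'a set \<Rightarrow> 'a set set" where
  "k_factors br K = {I. simple_ideal br (derived br K) I} \<union>
     (if lie_centre br K = {0} then {} else {lie_centre br K})"

definition kproj :: "('a::euclidean_space \<Rightarrow> 'a \<Rightarrow> 'a) \<Rightarrow> 'a set \<Rightarrow> 'a \<Rightarrow> 'a" where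
  "kproj br K x = (THE w. w \<in> K \<and> x - w \<in> B_orth br K)"

definition cartanQ :: "('a::euclidean_space \<Rightarrow> 'a \<Rightarrow> 'a) \<Rightarrow> 'a set \<Rightarrow> 'a \<Rightarrow> 'a \<Rightarrow> real" where
  "cartanQ br K x y = killing br (x - kproj br K x) (y - kproj br K y)
                      - killing br (kproj br K x) (kproj br K y)"

definition qproj :: "('a::euclidean_space \<Rightarrow> 'a \<Rightarrow> 'a) \<Rightarrow> 'a set \<Rightarrow> 'a set \<Rightarrow> 'a \<Rightarrow> 'a" where
  "qproj br K U x = (THE w. w \<in> U \<and> (\<forall>z\<in>U. cartanQ br K (x - w) z = 0))"

text \<open>Q|_U : Q restricted to U, extended by zero on the Q-orthogonal complement.\<close>
definition Qrestr :: "('a::euclidean_space \<Rightarrow> 'a \<Rightarrow> 'a) \<Rightarrow> 'a set \<Rightarrow> 'a set \<Rightarrow> 'a \<Rightarrow> 'a \<Rightarrow> real" where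
  "Qrestr br K U x y = cartanQ br K (qproj br K U x) (qproj br K U y)"

definition index_spaces :: "('a::euclidean_space \<Rightarrow> 'a \<Rightarrow> 'a) \<Rightarrow> 'a set \<Rightarrow> 'a set set" where
  "index_spaces br K = insert (B_orth br K) (k_factors br K)"

text \<open>The metric beta Q|_p + sum_i alpha_i Q|_{k_i} with parameters c (c p = beta, c k_i = alpha_i).\<close>
definition nr_metric :: "('a::euclidean_space \<Rightarrow> 'a \<Rightarrow> 'a) \<Rightarrow> 'a set \<Rightarrow> ('a set \<Rightarrow> real) \<Rightarrow> 'a \<Rightarrow> 'a \<Rightarrow> real" where
  "nr_metric br K c x y = (\<Sum>U\<in>index_spaces br K. c U * Qrestr br K U x y)"

definition in_MK :: "('a::euclidean_space \<Rightarrow> 'a \<Rightarrow> 'a) \<Rightarrow> 'a set \<Rightarrow> ('a set \<Rightarrow> real) \<Rightarrow> bool" where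
  "in_MK br K c \<longleftrightarrow> (\<forall>U\<in>index_spaces br K. c U > 0)"

definition metric_trace :: "('a::euclidean_space \<Rightarrow> 'a \<Rightarrow> real) \<Rightarrow> ('a \<Rightarrow> 'a \<Rightarrow> real) \<Rightarrow> real" where
  "metric_trace g b = ltrace (THE A. linear A \<and> (\<forall>x y. g (A x) y = b x y))"

text \<open>Levi-Civita connection of the left-invariant metric g (Koszul formula).\<close>
definition levi_civita :: "('a::euclidean_space \<Rightarrow> 'a \<Rightarrow> 'a) \<Rightarrow> ('a \<Rightarrow> 'a \<Rightarrow> real) \<Rightarrow> 'a \<Rightarrow> 'a \<Rightarrow> 'a" where
  "levi_civita br g X Y = (THE v. \<forall>Z. g v Z = (g (br X Y) Z - g (br Y Z) X + g (br Z X) Y) / 2)"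

definition riem :: "('a::euclidean_space \<Rightarrow> 'a \<Rightarrow> 'a) \<Rightarrow> ('a \<Rightarrow> 'a \<Rightarrow> real) \<Rightarrow> 'a \<Rightarrow> 'a \<Rightarrow> 'a \<Rightarrow> 'a" where
  "riem br g X Y Z = levi_civita br g X (levi_civita br g Y Z)
                     - levi_civita br g Y (levi_civita br g X Z)
                     - levi_civita br g (br X Y) Z"

definition ricci :: "('a::euclidean_space \<Rightarrow> 'a \<Rightarrow> 'a) \<Rightarrow> ('a \<Rightarrow> 'a \<Rightarrow> real) \<Rightarrow> 'a \<Rightarrow> 'a \<Rightarrow> real" where
  "ricci br g Y Z = ltrace (\<lambda>X. riem br g X Y Z)"

definition scalar_curv :: "('a::euclidean_space \<Rightarrow> 'a \<Rightarrow> 'a) \<Rightarrow> ('a \<Rightarrow> 'a \<Rightarrow> real) \<Rightarrow> real" where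
  "scalar_curv br g = metric_trace g (ricci br g)"

definition in_MT0 :: "('a::euclidean_space \<Rightarrow> 'a \<Rightarrow> 'a) \<Rightarrow> 'a set \<Rightarrow> ('a \<Rightarrow> 'a \<Rightarrow> real) \<Rightarrow> ('a set \<Rightarrow> real) \<Rightarrow> bool" where
  "in_MT0 br K T c \<longleftrightarrow> in_MK br K c \<and> metric_trace (nr_metric br K c) T = 0"

definition critical_S_MT0 :: "('a::euclidean_space \<Rightarrow> 'a \<Rightarrow> 'a) \<Rightarrow> 'a set \<Rightarrow> ('a \<Rightarrow> 'a \<Rightarrow> real) \<Rightarrow> ('a set \<Rightarrow> real) \<Rightarrow> bool" where
  "critical_S_MT0 br K T c \<longleftrightarrow> in_MT0 br K T c \<and>
     (\<forall>(\<gamma> :: real \<Rightarrow> 'a set \<Rightarrow> real) \<epsilon>.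
        \<epsilon> > 0 \<and> (\<forall>U\<in>index_spaces br K. \<gamma> 0 U = c U) \<and>
        (\<forall>U\<in>index_spaces br K. (\<lambda>t. \<gamma> t U) differentiable (at 0)) \<and>
        (\<forall>t. \<bar>t\<bar> < \<epsilon> \<longrightarrow> in_MT0 br K T (\<gamma> t))
        \<longrightarrow> ((\<lambda>t. scalar_curv br (nr_metric br K (\<gamma> t))) has_real_derivative 0) (at 0))"

end

theory Submission
  imports Defs
begin

text \<open>Scaling a metric by \<open>s > 0\<close> leaves its Levi-Civita connection and Ricci tensor
  unchanged, so \<open>S(s g) = S(g) / s\<close>, while \<open>tr\<^bsub>s g\<^esub> T = tr\<^bsub>g\<^esub> T / s\<close>. Hence the ray
  \<open>t \<mapsto> (1 + t) g\<close> stays in \<open>M\<^sub>T\<^sup>0\<close>, and along it \<open>S\<close> equals \<open>S(g) / (1 + t)\<close>, whose derivative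
  at \<open>t = 0\<close> is \<open>-S(g)\<close>; criticality forces \<open>S(g) = 0\<close>.

  The substance lies in making these formulas meaningful: metric traces and the Levi-Civita
  connection are defined by Riesz representation, so every metric of \<open>M\<^sub>K\<close> must be an inner
  product. This amounts to \<open>p\<close>, the centre of \<open>k\<close> and the simple ideals of \<open>[k,k]\<close> spanning
  \<open>g\<close>, which follows by splitting \<open>k\<close>, on which the Killing form is negative definite, into
  minimal ideals and their Killing-orthogonal complements.\<close>

section \<open>Traces, bilinear forms and orthogonal projections\<close>

lemma ltrace_diff: "ltrace (\<lambda>x. f x - h x) = ltrace f - ltrace h"
  by (simp add: ltrace_def inner_diff_left sum_subtractf)

lemma ltrace_scaleR: "ltrace (\<lambda>x. a *\<^sub>R f x) = a * ltrace f"
  by (simp add: ltrace_def sum_distrib_left)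

lemma linear_ltrace:
  assumes "\<And>x. linear (\<lambda>p. F p x)"
  shows "linear (\<lambda>p. ltrace (F p))"
  unfolding ltrace_def
  by (rule linearI) (simp_all add: linear_add[OF assms] linear_scale[OF assms]
      inner_add_left sum.distrib sum_distrib_left)

lemma linear_eq_sum_Basis:
  assumes "linear f"
  shows "f x = (\<Sum>v\<in>Basis. inner x v *\<^sub>R f v)"
proof -
  have "f x = f (\<Sum>v\<in>Basis. inner x v *\<^sub>R v)"
    by (simp add: euclidean_representation)
  also have "\<dots> = (\<Sum>v\<in>Basis. inner x v *\<^sub>R f v)"
    using assms by (simp add: linear_sum linear_scale)
  finally show ?thesis .
qed

lemma ltrace_comp_commute:
  assumes "linear f" "linear h"
  shows "ltrace (\<lambda>x. f (h x)) = ltrace (\<lambda>x. h (f x))"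
proof -
  have "ltrace (\<lambda>x. f (h x)) = (\<Sum>u\<in>Basis. \<Sum>v\<in>Basis. inner (h u) v * inner (f v) u)"
    unfolding ltrace_def linear_eq_sum_Basis[OF assms(1), of "h _"] by (simp add: inner_sum_left)
  also have "\<dots> = (\<Sum>v\<in>Basis. \<Sum>u\<in>Basis. inner (h u) v * inner (f v) u)"
    by (rule sum.swap)
  also have "\<dots> = ltrace (\<lambda>x. h (f x))"
    unfolding ltrace_def linear_eq_sum_Basis[OF assms(2), of "f _"]
    by (simp add: inner_sum_left mult.commute)
  finally show ?thesis .
qed

lemma inner_sum_Basis_representation:
  assumes "linear \<phi>"
  shows "inner (\<Sum>b\<in>Basis. \<phi> b *\<^sub>R b) y = \<phi> y"
proof -
  have "\<phi> y = (\<Sum>b\<in>Basis. \<phi> b * inner b y)"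
    using linear_eq_sum_Basis[OF assms, of y] by (simp add: inner_commute mult.commute)
  then show ?thesis by (simp add: inner_sum_left)
qed

lemma bilinear_compose:
  "bilinear F \<Longrightarrow> linear f \<Longrightarrow> linear h \<Longrightarrow> bilinear (\<lambda>x y. F (f x) (h y))"
  unfolding bilinear_def by (auto intro: linear_compose[unfolded o_def])

lemma bilinear_diff: "bilinear F \<Longrightarrow> bilinear G \<Longrightarrow> bilinear (\<lambda>x y. F x y - G x y)"
  unfolding bilinear_def by (auto intro: linear_compose_sub)

lemma linear_mult_left_real: "linear f \<Longrightarrow> linear (\<lambda>x. c * f x :: real)"
  using linear_compose_scale_right[of f c] by simp

lemma bilinear_weighted_sum:
  assumes "\<And>i. i \<in> I \<Longrightarrow> bilinear (F i)"
  shows "bilinear (\<lambda>x y. \<Sum>i\<in>I. c i * F i x y :: real)"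
  using assms unfolding bilinear_def
  by (auto intro!: linear_compose_sum linear_mult_left_real)

lemma subspace_right_kernel: "bilinear F \<Longrightarrow> subspace {y. \<forall>z\<in>U. F z y = 0}"
  unfolding subspace_def by (auto simp: bilinear_radd bilinear_rmul bilinear_rzero)

text \<open>The \<open>F\<close>-orthogonal space of \<open>U\<close> is the Euclidean orthogonal complement of the image of
  \<open>U\<close> under the map representing \<open>F\<close>, so its dimension is at least \<open>DIM('a) - dim U\<close>; by
  anisotropy it meets \<open>U\<close> trivially, hence it is a complement of \<open>U\<close>.\<close>
lemma form_proj_exists:
  fixes F :: "'a::euclidean_space \<Rightarrow> 'a \<Rightarrow> real"
  assumes F: "bilinear F" and U: "subspace U" and aniso: "\<forall>u\<in>U. u \<noteq> 0 \<longrightarrow> F u u \<noteq> 0"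
  shows "\<exists>w\<in>U. \<forall>z\<in>U. F z (x - w) = 0"
proof -
  define N where "N z = (\<Sum>b\<in>Basis. F z b *\<^sub>R b)" for z
  have inner_N: "inner (N z) y = F z y" for z y
    unfolding N_def by (rule inner_sum_Basis_representation) (use F in \<open>simp add: bilinear_def\<close>)
  have "linear N"
    unfolding N_def
    by (rule linearI) (simp_all add: bilinear_ladd[OF F] bilinear_lmul[OF F] scaleR_add_left
        sum.distrib scaleR_sum_right)
  define V where "V = {y. \<forall>z\<in>U. F z y = 0}"
  have V_eq: "V = {y \<in> UNIV. \<forall>a \<in> N ` U. orthogonal a y}"
    unfolding V_def orthogonal_def by (auto simp: inner_N)
  have "subspace (N ` U)" using \<open>linear N\<close> U by (rule linear_subspace_image)
  then have "dim V + dim (N ` U) = DIM('a)"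
    unfolding V_eq using dim_subspace_orthogonal_to_vectors[of "N ` U" UNIV]
    by (simp add: dim_UNIV)
  moreover have "dim (N ` U) \<le> dim U" using \<open>linear N\<close> by (rule dim_image_le)
  moreover have "subspace V" unfolding V_def using F by (rule subspace_right_kernel)
  moreover have "U \<inter> V = {0}"
    using aniso U \<open>subspace V\<close> unfolding V_def by (auto simp: subspace_0 bilinear_rzero[OF F])
  moreover define W where "W = {a + b |a b. a \<in> U \<and> b \<in> V}"
  ultimately have "dim W \<ge> DIM('a)" "subspace W"
    using dim_sums_Int[OF U \<open>subspace V\<close>] subspace_sums[OF U \<open>subspace V\<close>] by auto
  then have "x \<in> W"
    using dim_subset_UNIV[of W] dim_eq_full[of W] span_eq_iff[of W] by (simp add: dim_UNIV)
  then show ?thesis unfolding W_def V_def by force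
qed

lemma form_proj_unique:
  assumes F: "bilinear F" and U: "subspace U" and aniso: "\<forall>u\<in>U. u \<noteq> 0 \<longrightarrow> F u u \<noteq> 0"
    and "w1 \<in> U" "\<forall>z\<in>U. F z (x - w1) = 0"
    and "w2 \<in> U" "\<forall>z\<in>U. F z (x - w2) = 0"
  shows "w1 = w2"
proof -
  have "w2 - w1 \<in> U" using U assms(4,6) by (simp add: subspace_diff)
  moreover have "F (w2 - w1) (w2 - w1) = F (w2 - w1) (x - w1) - F (w2 - w1) (x - w2)"
    using F by (simp add: bilinear_rsub)
  ultimately show ?thesis using assms(5,7) aniso by auto
qed

definition form_proj :: "('a::euclidean_space \<Rightarrow> 'a \<Rightarrow> real) \<Rightarrow> 'a set \<Rightarrow> 'a \<Rightarrow> 'a" where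
  "form_proj F U x = (THE w. w \<in> U \<and> (\<forall>z\<in>U. F z (x - w) = 0))"

context
  fixes F :: "'a::euclidean_space \<Rightarrow> 'a \<Rightarrow> real" and U :: "'a set"
  assumes F: "bilinear F" and U: "subspace U" and aniso: "\<forall>u\<in>U. u \<noteq> 0 \<longrightarrow> F u u \<noteq> 0"
begin

lemma form_proj: "form_proj F U x \<in> U" "\<forall>z\<in>U. F z (x - form_proj F U x) = 0"
proof -
  have "\<exists>!w. w \<in> U \<and> (\<forall>z\<in>U. F z (x - w) = 0)"
    using form_proj_exists[OF F U aniso] form_proj_unique[OF F U aniso] by blast
  then have "form_proj F U x \<in> U \<and> (\<forall>z\<in>U. F z (x - form_proj F U x) = 0)"
    unfolding form_proj_def by (rule theI')
  then show "form_proj F U x \<in> U" "\<forall>z\<in>U. F z (x - form_proj F U x) = 0" by auto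
qed

lemma form_proj_eqI: "w \<in> U \<Longrightarrow> \<forall>z\<in>U. F z (x - w) = 0 \<Longrightarrow> form_proj F U x = w"
  using form_proj_unique[OF F U aniso] form_proj by blast

lemma linear_form_proj: "linear (form_proj F U)"
proof (rule linearI)
  fix x y
  have "\<forall>z\<in>U. F z ((x - form_proj F U x) + (y - form_proj F U y)) = 0"
    using form_proj(2) by (simp add: bilinear_radd[OF F])
  then have "\<forall>z\<in>U. F z (x + y - (form_proj F U x + form_proj F U y)) = 0"
    by (simp add: algebra_simps)
  then show "form_proj F U (x + y) = form_proj F U x + form_proj F U y"
    using form_proj(1) U by (intro form_proj_eqI) (simp_all add: subspace_add)
next
  fix r x
  have "\<forall>z\<in>U. F z (r *\<^sub>R (x - form_proj F U x)) = 0"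
    using form_proj(2) by (simp add: bilinear_rmul[OF F])
  then have "\<forall>z\<in>U. F z (r *\<^sub>R x - r *\<^sub>R form_proj F U x) = 0"
    by (simp add: scaleR_diff_right)
  then show "form_proj F U (r *\<^sub>R x) = r *\<^sub>R form_proj F U x"
    using form_proj(1) U by (intro form_proj_eqI) (simp_all add: subspace_scale)
qed

end

lemma independent_if_pairwise_orthogonal:
  fixes F :: "'a::euclidean_space \<Rightarrow> 'a \<Rightarrow> real"
  assumes F: "bilinear F" and nonisotropic: "\<forall>v\<in>V. F v v \<noteq> 0"
    and orth: "\<forall>v\<in>V. \<forall>w\<in>V. v \<noteq> w \<longrightarrow> F v w = 0"
  shows "independent V"
  unfolding independent_explicit_module
proof (intro allI impI)
  fix t u v assume t: "finite t" "t \<subseteq> V" and s: "(\<Sum>v\<in>t. u v *\<^sub>R v) = 0" and v: "v \<in> t"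
  have "0 = F v (\<Sum>x\<in>t. u x *\<^sub>R x)" unfolding s by (rule bilinear_rzero[OF F, symmetric])
  also have "\<dots> = (\<Sum>x\<in>t. u x * F v x)"
    using F by (simp add: bilinear_def linear_sum linear_scale)
  also have "\<dots> = u v * F v v + (\<Sum>x\<in>t - {v}. u x * F v x)"
    by (rule sum.remove[OF t(1) v])
  also have "(\<Sum>x\<in>t - {v}. u x * F v x) = 0"
    using t v orth by (intro sum.neutral) (metis DiffE insertCI mult_zero_right subsetD)
  finally show "u v = 0" using nonisotropic v t by auto
qed


section \<open>Curvature of a rescaled metric\<close>

locale anisotropic_form =
  fixes g :: "'a::euclidean_space \<Rightarrow> 'a \<Rightarrow> real"
  assumes bilinear: "bilinear g" and anisotropic: "\<And>v. g v v = 0 \<Longrightarrow> v = 0"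
begin

lemma scale: "s \<noteq> 0 \<Longrightarrow> anisotropic_form (\<lambda>x y. s * g x y)"
  using bilinear anisotropic
  by unfold_locales (auto simp: bilinear_def intro: linear_mult_left_real)

lemma representation_unique:
  assumes "\<forall>z. g v z = \<phi> z" "\<forall>z. g w z = \<phi> z"
  shows "v = w"
proof -
  have "g (v - w) (v - w) = g v (v - w) - g w (v - w)"
    using bilinear by (simp add: bilinear_lsub)
  then show ?thesis using assms anisotropic[of "v - w"] by simp
qed

text \<open>Riesz: \<open>v \<mapsto> g v\<close> is injective, hence onto the dual, which the inner product
  identifies with the space itself.\<close>
lemma representation_exists:
  assumes "linear \<phi>"
  shows "\<exists>v. \<forall>z. g v z = \<phi> z"
proof -
  define G where "G v = (\<Sum>b\<in>Basis. g v b *\<^sub>R b)" for v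
  have inner_G: "inner (G v) z = g v z" for v z
    unfolding G_def by (rule inner_sum_Basis_representation) (use bilinear in \<open>simp add: bilinear_def\<close>)
  have "linear G"
    unfolding G_def
    by (rule linearI) (simp_all add: bilinear_ladd[OF bilinear] bilinear_lmul[OF bilinear]
        scaleR_add_left sum.distrib scaleR_sum_right)
  moreover have "inj G"
    by (rule injI) (metis inner_G representation_unique)
  ultimately have "surj G" by (metis linear_injective_imp_surjective)
  then obtain v where "G v = (\<Sum>b\<in>Basis. \<phi> b *\<^sub>R b)" by (metis surjD)
  then show ?thesis using inner_G inner_sum_Basis_representation[OF assms] by metis
qed

lemma representation:
  assumes "linear \<phi>"
  shows "g (THE v. \<forall>z. g v z = \<phi> z) z = \<phi> z"
  using theI'[of "\<lambda>v. \<forall>z. g v z = \<phi> z"] representation_exists[OF assms] representation_unique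
  by blast

lemma representation_eqI:
  assumes "linear \<phi>" "\<And>z. g v z = \<phi> z"
  shows "(THE v. \<forall>z. g v z = \<phi> z) = v"
  using representation[OF assms(1)] assms(2) representation_unique by blast

lemma linear_representation:
  assumes lin: "\<And>p. linear (\<phi> p)" and lin_param: "\<And>z. linear (\<lambda>p. \<phi> p z)"
  shows "linear (\<lambda>p. THE v. \<forall>z. g v z = \<phi> p z)"
  by (rule linearI; rule representation_eqI[OF lin])
    (simp_all add: bilinear_ladd[OF bilinear] bilinear_lmul[OF bilinear] representation[OF lin]
      linear_add[OF lin_param] linear_scale[OF lin_param])

lemma metric_trace_eqI:
  assumes "linear A" "\<And>x y. g (A x) y = b x y"
  shows "metric_trace g b = ltrace A"
proof -
  have "(THE A. linear A \<and> (\<forall>x y. g (A x) y = b x y)) = A"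
    using assms representation_unique by (intro the_equality) (simp, metis ext)
  then show ?thesis unfolding metric_trace_def by simp
qed

lemma metric_trace_scale:
  assumes b: "bilinear b" and s: "s \<noteq> 0"
  shows "metric_trace (\<lambda>x y. s * g x y) b = metric_trace g b / s"
proof -
  define A where "A x = (THE v. \<forall>y. g v y = b x y)" for x
  have "linear A"
    unfolding A_def[abs_def] using b by (intro linear_representation) (simp_all add: bilinear_def)
  moreover have A: "g (A x) y = b x y" for x y
    unfolding A_def using b by (intro representation) (simp add: bilinear_def)
  ultimately have "metric_trace g b = ltrace A"
    by (rule metric_trace_eqI)
  moreover have "metric_trace (\<lambda>x y. s * g x y) b = ltrace (\<lambda>x. (1 / s) *\<^sub>R A x)"
    using \<open>linear A\<close> A s
    by (intro anisotropic_form.metric_trace_eqI[OF scale[OF s]])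
      (simp_all add: linear_compose_scale_right bilinear_lmul[OF bilinear])
  ultimately show ?thesis by (simp add: ltrace_scaleR)
qed

end

definition koszul :: "('a::euclidean_space \<Rightarrow> 'a \<Rightarrow> 'a) \<Rightarrow> ('a \<Rightarrow> 'a \<Rightarrow> real) \<Rightarrow> 'a \<Rightarrow> 'a \<Rightarrow> 'a \<Rightarrow> real" where
  "koszul br g X Y Z = (g (br X Y) Z - g (br Y Z) X + g (br Z X) Y) / 2"

lemma levi_civita_koszul: "levi_civita br g X Y = (THE v. \<forall>Z. g v Z = koszul br g X Y Z)"
  unfolding levi_civita_def koszul_def ..

lemma koszul_scale: "koszul br (\<lambda>x y. s * g x y) X Y Z = s * koszul br g X Y Z"
  unfolding koszul_def by (simp add: algebra_simps)

lemma levi_civita_scale: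
  assumes "s \<noteq> 0"
  shows "levi_civita br (\<lambda>x y. s * g x y) = levi_civita br g"
  using assms by (intro ext) (simp add: levi_civita_koszul koszul_scale)

lemma ricci_scale: "s \<noteq> 0 \<Longrightarrow> ricci br (\<lambda>x y. s * g x y) = ricci br g"
  unfolding ricci_def[abs_def] riem_def[abs_def] by (simp add: levi_civita_scale)

lemma koszul_trilinear:
  assumes "bilinear br" "bilinear g"
  shows "linear (koszul br g X Y)" "linear (\<lambda>X. koszul br g X Y Z)" "linear (\<lambda>Y. koszul br g X Y Z)"
  unfolding koszul_def using assms
  by (auto intro!: linearI simp: bilinear_ladd bilinear_radd bilinear_lmul bilinear_rmul field_simps)

context anisotropic_form
begin

lemma bilinear_levi_civita:
  assumes "bilinear br"
  shows "bilinear (levi_civita br g)"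
  unfolding bilinear_def levi_civita_koszul
  using koszul_trilinear[OF assms bilinear] by (auto intro!: linear_representation)

lemma bilinear_ricci:
  assumes br: "bilinear br"
  shows "bilinear (ricci br g)"
proof -
  have L: "linear (levi_civita br g X)" "linear (\<lambda>X. levi_civita br g X Y)" for X Y
    using bilinear_levi_civita[OF br] by (simp_all add: bilinear_def)
  have "linear (\<lambda>Y. riem br g X Y Z)" "linear (\<lambda>Z. riem br g X Y Z)" for X Y Z
    unfolding riem_def using br
    by (auto simp: bilinear_def intro!: linear_compose_sub L
        linear_compose[OF L(2) L(1), unfolded o_def] linear_compose[OF _ L(2), unfolded o_def]
        linear_compose[OF L(1) L(1), unfolded o_def])
  then show ?thesis
    unfolding bilinear_def ricci_def by (auto intro: linear_ltrace)
qed

lemma scalar_curv_scale: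
  assumes "bilinear br" "s \<noteq> 0"
  shows "scalar_curv br (\<lambda>x y. s * g x y) = scalar_curv br g / s"
  unfolding scalar_curv_def ricci_scale[OF assms(2)]
  using bilinear_ricci[OF assms(1)] assms(2) by (rule metric_trace_scale)

end

section \<open>The Killing form\<close>

lemma lie_bracket_antisym:
  assumes "lie_algebra br"
  shows "br y x = - br x y"
proof -
  have "bilinear br" "br (x + y) (x + y) = 0" "br x x = 0" "br y y = 0"
    using assms by (auto simp: lie_algebra_def)
  then show ?thesis by (simp add: bilinear_ladd bilinear_radd eq_neg_iff_add_eq_0 add.commute)
qed

lemma lie_ad_bracket:
  assumes "lie_algebra br"
  shows "br (br a c) w = br a (br c w) - br c (br a w)"
proof -
  have "br a (br c w) + br c (br w a) + br w (br a c) = 0" "bilinear br"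
    using assms by (auto simp: lie_algebra_def)
  then show ?thesis
    using lie_bracket_antisym[OF assms, of w "br a c"] lie_bracket_antisym[OF assms, of w a]
    by (simp add: bilinear_rneg algebra_simps)
qed

lemma bilinear_killing:
  assumes "bilinear br"
  shows "bilinear (killing br)"
proof -
  have "linear (\<lambda>x. killing br x y)" "linear (\<lambda>y. killing br x y)" for x y
    unfolding killing_def ltrace_def
    by (rule linearI; simp add: assms bilinear_ladd bilinear_radd bilinear_lmul bilinear_rmul
        inner_add_left sum.distrib sum_distrib_left)+
  then show ?thesis by (simp add: bilinear_def)
qed

lemma killing_commute:
  assumes "bilinear br"
  shows "killing br x y = killing br y x"
  unfolding killing_def by (rule ltrace_comp_commute) (use assms in \<open>simp_all add: bilinear_def\<close>)

lemma killing_invariant: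
  assumes L: "lie_algebra br"
  shows "killing br (br x y) z = killing br x (br y z)"
proof -
  have b: "bilinear br" using L by (simp add: lie_algebra_def)
  have "ltrace (\<lambda>u. br y (br x (br z u))) = ltrace (\<lambda>u. br x (br z (br y u)))"
    using ltrace_comp_commute[of "br y" "\<lambda>u. br x (br z u)"] b
    by (simp add: bilinear_def linear_compose[unfolded o_def])
  then show ?thesis
    unfolding killing_def lie_ad_bracket[OF L]
    using b by (simp add: bilinear_rsub ltrace_diff)
qed

lemma derived_subset:
  assumes "subspace J" "\<And>x y. x \<in> J \<Longrightarrow> y \<in> J \<Longrightarrow> br x y \<in> J"
  shows "derived br J \<subseteq> J"
  unfolding derived_def using assms by (intro span_minimal) auto

lemma derived_mono: "J \<subseteq> K \<Longrightarrow> derived br J \<subseteq> derived br K"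
  unfolding derived_def by (rule span_mono) blast

section \<open>Cartan decomposition and the metrics of \<open>M\<^sub>K\<close>\<close>

lemma nr_metric_scale: "nr_metric br K (\<lambda>U. s * c U) = (\<lambda>x y. s * nr_metric br K c x y)"
  unfolding nr_metric_def by (simp add: sum_distrib_left mult.assoc)

locale cartan_decomposition =
  fixes br :: "'a::euclidean_space \<Rightarrow> 'a \<Rightarrow> 'a" and K :: "'a set"
  assumes lie: "lie_algebra br" and cartan: "cartan_subalgebra_k br K"
begin

lemma bilinear_br: "bilinear br"
  using lie by (simp add: lie_algebra_def)

lemma linear_br: "linear (br x)" "linear (\<lambda>x. br x y)"
  using bilinear_br by (simp_all add: bilinear_def)

lemma subspace_K: "subspace K"
  using cartan by (simp add: cartan_subalgebra_k_def lie_subalgebra_def)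

lemma bracket_K: "x \<in> K \<Longrightarrow> y \<in> K \<Longrightarrow> br x y \<in> K"
  using cartan by (simp add: cartan_subalgebra_k_def lie_subalgebra_def)

lemma killing_neg_K: "x \<in> K \<Longrightarrow> x \<noteq> 0 \<Longrightarrow> killing br x x < 0"
  using cartan by (simp add: cartan_subalgebra_k_def)

lemma killing_pos_p: "y \<in> B_orth br K \<Longrightarrow> y \<noteq> 0 \<Longrightarrow> killing br y y > 0"
  using cartan by (simp add: cartan_subalgebra_k_def)

lemma killing_anisotropic_K: "U \<subseteq> K \<Longrightarrow> \<forall>u\<in>U. u \<noteq> 0 \<longrightarrow> killing br u u \<noteq> 0"
  using killing_neg_K by force

lemmas bilinear_B = bilinear_killing[OF bilinear_br]

lemma subspace_p: "subspace (B_orth br K)"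
  unfolding B_orth_def using bilinear_B by (rule subspace_right_kernel)

lemma kproj_form_proj: "kproj br K = form_proj (killing br) K"
  unfolding kproj_def form_proj_def B_orth_def by (rule ext) simp

lemma kproj: "kproj br K x \<in> K" "x - kproj br K x \<in> B_orth br K"
  using form_proj[OF bilinear_B subspace_K killing_anisotropic_K, of x]
  unfolding kproj_form_proj B_orth_def by auto

lemma linear_kproj: "linear (kproj br K)"
  unfolding kproj_form_proj
  by (rule linear_form_proj[OF bilinear_B subspace_K killing_anisotropic_K]) simp

lemma bilinear_cartanQ: "bilinear (cartanQ br K)"
proof -
  have "linear (\<lambda>x. x - kproj br K x)"
    using linear_kproj by (simp add: linear_compose_sub linear_id[unfolded id_def])
  then show ?thesis
    unfolding cartanQ_def[abs_def]
    by (intro bilinear_diff bilinear_compose[OF bilinear_B] linear_kproj)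
qed

lemma cartanQ_commute: "cartanQ br K x y = cartanQ br K y x"
  unfolding cartanQ_def using killing_commute[OF bilinear_br] by simp

lemma cartanQ_pos:
  assumes "x \<noteq> 0"
  shows "cartanQ br K x x > 0"
proof -
  let ?k = "kproj br K x" and ?p = "x - kproj br K x"
  have "killing br ?p ?p \<ge> 0"
    using killing_pos_p[OF kproj(2)[of x]]
    by (cases "?p = 0") (auto simp: bilinear_lzero[OF bilinear_B] less_imp_le)
  moreover have "killing br ?k ?k \<le> 0"
    using killing_neg_K[OF kproj(1)[of x]]
    by (cases "?k = 0") (auto simp: bilinear_lzero[OF bilinear_B] less_imp_le)
  moreover have "?p \<noteq> 0 \<or> ?k \<noteq> 0" using assms by auto
  then have "killing br ?p ?p > 0 \<or> killing br ?k ?k < 0"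
    using killing_pos_p[OF kproj(2)[of x]] killing_neg_K[OF kproj(1)[of x]] by blast
  ultimately show ?thesis unfolding cartanQ_def by auto
qed

lemma cartanQ_anisotropic: "\<forall>u\<in>U. u \<noteq> 0 \<longrightarrow> cartanQ br K u u \<noteq> 0"
  using cartanQ_pos by (metis less_irrefl)

lemma qproj_form_proj: "qproj br K U = form_proj (cartanQ br K) U"
proof -
  have "(\<forall>z\<in>U. cartanQ br K (x - w) z = 0) \<longleftrightarrow> (\<forall>z\<in>U. cartanQ br K z (x - w) = 0)" for x w
    using cartanQ_commute by auto
  then show ?thesis unfolding qproj_def form_proj_def by simp
qed

context
  fixes U :: "'a set" assumes U: "subspace U"
begin

lemma qproj: "qproj br K U x \<in> U" "z \<in> U \<Longrightarrow> cartanQ br K z (x - qproj br K U x) = 0"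
  unfolding qproj_form_proj using form_proj[OF bilinear_cartanQ U cartanQ_anisotropic] by auto

lemma bilinear_Qrestr: "bilinear (Qrestr br K U)"
  unfolding Qrestr_def[abs_def] qproj_form_proj
  by (intro bilinear_compose[OF bilinear_cartanQ] linear_form_proj[OF bilinear_cartanQ U cartanQ_anisotropic])

lemma Qrestr_eq_0_orthogonal:
  assumes "Qrestr br K U v v = 0" "z \<in> U"
  shows "cartanQ br K z v = 0"
proof -
  have "qproj br K U v = 0" using assms(1) cartanQ_pos unfolding Qrestr_def by force
  then show ?thesis using qproj(2)[OF assms(2), of v] by simp
qed

end

lemma Qrestr_nonneg: "Qrestr br K U v v \<ge> 0"
  unfolding Qrestr_def using cartanQ_pos[of "qproj br K U v"]
  by (cases "qproj br K U v = 0") (auto simp: bilinear_lzero[OF bilinear_cartanQ])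


abbreviation kideal :: "'a set \<Rightarrow> bool" where
  "kideal I \<equiv> lie_ideal_in br K I"

definition killing_perp :: "'a set \<Rightarrow> 'a set" where
  "killing_perp I = {y\<in>K. \<forall>x\<in>I. killing br x y = 0}"

definition minimal_kideal :: "'a set \<Rightarrow> bool" where
  "minimal_kideal J \<longleftrightarrow> kideal J \<and> J \<noteq> {0} \<and> (\<forall>J0. kideal J0 \<longrightarrow> J0 \<subseteq> J \<longrightarrow> J0 = {0} \<or> J0 = J)"

lemma kidealD:
  assumes "kideal I"
  shows "subspace I" "I \<subseteq> K" "x \<in> K \<Longrightarrow> y \<in> I \<Longrightarrow> br x y \<in> I" "x \<in> K \<Longrightarrow> y \<in> I \<Longrightarrow> br y x \<in> I"
proof -
  show "subspace I" "I \<subseteq> K" and *: "x \<in> K \<Longrightarrow> y \<in> I \<Longrightarrow> br x y \<in> I" for x y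
    using assms by (auto simp: lie_ideal_in_def)
  show "br y x \<in> I" if "x \<in> K" "y \<in> I"
    using subspace_neg[OF \<open>subspace I\<close> *[OF that]] lie_bracket_antisym[OF lie, of y x] by simp
qed

lemma kideal_K: "kideal K"
  unfolding lie_ideal_in_def using subspace_K bracket_K by auto

lemma kideal_Int: "kideal I \<Longrightarrow> kideal J \<Longrightarrow> kideal (I \<inter> J)"
  unfolding lie_ideal_in_def by (auto intro: subspace_inter)

lemma kideal_killing_perp:
  assumes I: "kideal I"
  shows "kideal (killing_perp I)"
  unfolding lie_ideal_in_def
proof (intro conjI ballI)
  show "subspace (killing_perp I)"
    unfolding killing_perp_def subspace_def using subspace_K
    by (auto simp: bilinear_radd[OF bilinear_B] bilinear_rmul[OF bilinear_B]
        bilinear_rzero[OF bilinear_B] subspace_0 subspace_add subspace_scale)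
  show "killing_perp I \<subseteq> K" unfolding killing_perp_def by auto
  fix k y assume "k \<in> K" "y \<in> killing_perp I"
  moreover have "killing br x (br k y) = killing br (br x k) y" for x
    using killing_invariant[OF lie] by simp
  ultimately show "br k y \<in> killing_perp I"
    using kidealD(4)[OF I] bracket_K unfolding killing_perp_def by auto
qed

lemma killing_perp_decomp:
  assumes I: "kideal I" and k: "k \<in> K"
  shows "\<exists>w\<in>I. k - w \<in> killing_perp I"
proof -
  obtain w where w: "w \<in> I" "\<forall>z\<in>I. killing br z (k - w) = 0"
    using form_proj_exists[OF bilinear_B kidealD(1)[OF I] killing_anisotropic_K[OF kidealD(2)[OF I]]]
    by blast
  moreover have "k - w \<in> K" using subspace_K k w(1) kidealD(2)[OF I] by (auto intro: subspace_diff)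
  ultimately show ?thesis unfolding killing_perp_def by auto
qed

lemma killing_perp_Int: "v \<in> I \<Longrightarrow> v \<in> killing_perp I \<Longrightarrow> v = 0"
  unfolding killing_perp_def using killing_neg_K by force

lemma bracket_killing_perp:
  assumes I: "kideal I" and "a \<in> I" "b \<in> killing_perp I"
  shows "br b a = 0"
proof -
  have "b \<in> K" "a \<in> K" using assms kidealD(2)[OF I] unfolding killing_perp_def by auto
  then have "br b a \<in> I" "br b a \<in> killing_perp I"
    using assms kidealD(3)[OF I] kidealD(4)[OF kideal_killing_perp[OF I]] by auto
  then show ?thesis by (rule killing_perp_Int)
qed

text \<open>Since \<open>k = J \<oplus> J\<^sup>\<bottom>\<close> and \<open>J\<^sup>\<bottom>\<close> commutes with \<open>J\<close>, \<open>k\<close> acts on an ideal \<open>J\<close> through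
  \<open>J\<close> itself.\<close>
lemma kideal_bracket_through:
  assumes J: "kideal J" and "k \<in> K" "y \<in> J"
  shows "\<exists>w\<in>J. br k y = br w y"
proof -
  obtain w where w: "w \<in> J" "k - w \<in> killing_perp J"
    using killing_perp_decomp[OF J \<open>k \<in> K\<close>] by blast
  have "br k y = br w y + br (k - w) y"
    using linear_add[OF linear_br(2), of w "k - w" y] by simp
  then show ?thesis using bracket_killing_perp[OF J \<open>y \<in> J\<close> w(2)] w(1) by auto
qed

lemma abelian_kideal_central:
  assumes J: "kideal J" and abelian: "\<forall>a\<in>J. \<forall>b\<in>J. br a b = 0"
  shows "J \<subseteq> lie_centre br K"
  unfolding lie_centre_def using kidealD(2)[OF J] abelian kideal_bracket_through[OF J] by fastforce

lemma kideal_derived: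
  assumes J: "kideal J"
  shows "kideal (derived br J)"
  unfolding lie_ideal_in_def
proof (intro conjI ballI)
  show "subspace (derived br J)" unfolding derived_def by (rule subspace_span)
  show "derived br J \<subseteq> K"
    using derived_subset[OF kidealD(1)[OF J]] kidealD(2,3)[OF J] by blast
  fix k y assume k: "k \<in> K" and y: "y \<in> derived br J"
  have "br k (br a b) \<in> derived br J" if "a \<in> J" "b \<in> J" for a b
  proof -
    have "br k (br a b) = br (br k a) b + br a (br k b)"
      using lie_ad_bracket[OF lie, of k a b] by simp
    moreover have "br (br k a) b \<in> derived br J" "br a (br k b) \<in> derived br J"
      unfolding derived_def using that k kidealD(3)[OF J] by (intro span_base; blast)+
    ultimately show ?thesis unfolding derived_def by (simp add: span_add)
  qed
  then have "span (br k ` {br a b |a b. a \<in> J \<and> b \<in> J}) \<subseteq> derived br J"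
    unfolding derived_def by (intro span_minimal) auto
  then have "br k ` derived br J \<subseteq> derived br J"
    unfolding derived_def linear_span_image[OF linear_br(1), symmetric] .
  then show "br k y \<in> derived br J" using y by auto
qed

lemma kideal_of_kideal:
  assumes J: "kideal J" and J0: "lie_ideal_in br J J0"
  shows "kideal J0"
  unfolding lie_ideal_in_def
proof (intro conjI ballI)
  show "subspace J0" "J0 \<subseteq> K" using J0 kidealD(2)[OF J] by (auto simp: lie_ideal_in_def)
  fix k y assume "k \<in> K" "y \<in> J0"
  moreover have "y \<in> J" using J0 \<open>y \<in> J0\<close> by (auto simp: lie_ideal_in_def)
  ultimately show "br k y \<in> J0"
    using kideal_bracket_through[OF J] J0 by (metis lie_ideal_in_def)
qed

lemma derived_K_subset: "derived br K \<subseteq> K"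
  by (rule derived_subset[OF subspace_K bracket_K])

lemma minimal_nonabelian_kideal_simple:
  assumes J: "minimal_kideal J" and ab: "a \<in> J" "b \<in> J" "br a b \<noteq> 0"
  shows "simple_ideal br (derived br K) J"
proof -
  have "kideal J" using J by (simp add: minimal_kideal_def)
  have "derived br J \<subseteq> J"
    using derived_subset[OF kidealD(1)[OF \<open>kideal J\<close>]] kidealD(2,3)[OF \<open>kideal J\<close>] by blast
  moreover have "br a b \<in> derived br J" unfolding derived_def using ab by (auto intro: span_base)
  ultimately have "derived br J = J"
    using J kideal_derived[OF \<open>kideal J\<close>] ab(3) unfolding minimal_kideal_def by blast
  then have "J \<subseteq> derived br K" using derived_mono[OF kidealD(2)[OF \<open>kideal J\<close>], of br] by simp
  then have "lie_ideal_in br (derived br K) J"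
    unfolding lie_ideal_in_def using kidealD[OF \<open>kideal J\<close>] derived_K_subset by blast
  moreover have "J0 = {0} \<or> J0 = J" if "lie_ideal_in br J J0" for J0
    using J kideal_of_kideal[OF \<open>kideal J\<close> that] that
    unfolding minimal_kideal_def lie_ideal_in_def by blast
  ultimately show ?thesis unfolding simple_ideal_def using ab by blast
qed

lemma minimal_kideal_exists:
  assumes I: "kideal I" "I \<noteq> {0}"
  shows "\<exists>J. minimal_kideal J \<and> J \<subseteq> I"
proof -
  obtain J where J: "kideal J" "J \<subseteq> I" "J \<noteq> {0}"
    and least: "\<And>J'. kideal J' \<and> J' \<subseteq> I \<and> J' \<noteq> {0} \<Longrightarrow> dim J \<le> dim J'"
    using ex_has_least_nat[of "\<lambda>J. kideal J \<and> J \<subseteq> I \<and> J \<noteq> {0}" I dim] I by blast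
  have "J0 = J" if "kideal J0" "J0 \<subseteq> J" "J0 \<noteq> {0}" for J0
    using least[of J0] that J subspace_dim_equal[OF kidealD(1)[OF \<open>kideal J0\<close>] kidealD(1)[OF J(1)]]
    by auto
  then show ?thesis using J unfolding minimal_kideal_def by blast
qed

abbreviation simple_factors :: "'a set set" where
  "simple_factors \<equiv> {J. simple_ideal br (derived br K) J}"

lemma minimal_kideal_subset_span:
  assumes J: "minimal_kideal J"
  shows "J \<subseteq> span (lie_centre br K \<union> \<Union>simple_factors)"
proof -
  have "J \<subseteq> lie_centre br K \<or> J \<in> simple_factors"
  proof (cases "\<forall>a\<in>J. \<forall>b\<in>J. br a b = 0")
    case True
    then show ?thesis using abelian_kideal_central J unfolding minimal_kideal_def by blast
  next
    case False
    then show ?thesis using minimal_nonabelian_kideal_simple[OF J] by blast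
  qed
  then have "J \<subseteq> lie_centre br K \<union> \<Union>simple_factors" by blast
  then show ?thesis using span_superset by blast
qed

text \<open>Split off a minimal ideal \<open>J\<close> and induct on the dimension of the rest, \<open>I \<inter> J\<^sup>\<bottom>\<close>.\<close>
lemma kideal_subset_span:
  assumes "kideal I"
  shows "I \<subseteq> span (lie_centre br K \<union> \<Union>simple_factors)"
  using assms
proof (induction "dim I" arbitrary: I rule: less_induct)
  case less
  note I = less.prems
  show ?case
  proof (cases "I = {0}")
    case True
    then show ?thesis by (simp add: span_zero)
  next
    case False
    then obtain J where J: "minimal_kideal J" "J \<subseteq> I"
      using minimal_kideal_exists[OF I] by blast
    then have "kideal J" "J \<noteq> {0}" by (simp_all add: minimal_kideal_def)
    define I2 where "I2 = I \<inter> killing_perp J"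
    have I2: "kideal I2"
      unfolding I2_def by (rule kideal_Int[OF I kideal_killing_perp[OF \<open>kideal J\<close>]])
    obtain j where "j \<in> J" "j \<noteq> 0" using subspace_0[OF kidealD(1)[OF \<open>kideal J\<close>]] \<open>J \<noteq> {0}\<close> by blast
    then have "j \<in> I" "j \<notin> I2" using J(2) killing_perp_Int[of j J] unfolding I2_def by auto
    moreover have "I2 \<subseteq> I" unfolding I2_def by blast
    ultimately have "\<not> dim I \<le> dim I2"
      using subspace_dim_equal[OF kidealD(1)[OF I2] kidealD(1)[OF I]] by blast
    then have "dim I2 < dim I" by simp
    then have I2_span: "I2 \<subseteq> span (lie_centre br K \<union> \<Union>simple_factors)"
      using less.hyps I2 by blast
    show ?thesis
    proof
      fix x assume "x \<in> I"
      then obtain w where w: "w \<in> J" "x - w \<in> killing_perp J"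
        using killing_perp_decomp[OF \<open>kideal J\<close>] kidealD(2)[OF I] by blast
      then have "x - w \<in> I2"
        unfolding I2_def using \<open>x \<in> I\<close> J(2) kidealD(1)[OF I] by (auto intro: subspace_diff)
      then have "w + (x - w) \<in> span (lie_centre br K \<union> \<Union>simple_factors)"
        using I2_span minimal_kideal_subset_span[OF J(1)] w(1) by (blast intro: span_add)
      then show "x \<in> span (lie_centre br K \<union> \<Union>simple_factors)" by simp
    qed
  qed
qed


lemma simple_factorD:
  assumes "J \<in> simple_factors"
  shows "subspace J" "J \<subseteq> derived br K" "J \<subseteq> K"
    "x \<in> derived br K \<Longrightarrow> y \<in> J \<Longrightarrow> br x y \<in> J"
    "\<exists>x\<in>J. \<exists>y\<in>J. br x y \<noteq> 0" "lie_ideal_in br J J0 \<Longrightarrow> J0 = {0} \<or> J0 = J"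
  using assms derived_K_subset by (auto simp: simple_ideal_def lie_ideal_in_def)

lemma simple_factor_nonzero: "J \<in> simple_factors \<Longrightarrow> \<exists>x\<in>J. x \<noteq> 0"
  using simple_factorD(5) bilinear_lzero[OF bilinear_br] by metis

lemma simple_factor_bracket: "J \<in> simple_factors \<Longrightarrow> x \<in> J \<Longrightarrow> y \<in> J \<Longrightarrow> br x y \<in> J"
  using simple_factorD(2,4) by blast

lemma simple_factor_perfect:
  assumes J: "J \<in> simple_factors"
  shows "J \<subseteq> derived br J"
proof -
  have "derived br J \<subseteq> J"
    using derived_subset simple_factorD(1)[OF J] simple_factor_bracket[OF J] by blast
  moreover have "br x ` derived br J \<subseteq> derived br J" if "x \<in> J" for x
  proof -
    have "br x ` {br a b |a b. a \<in> J \<and> b \<in> J} \<subseteq> {br a b |a b. a \<in> J \<and> b \<in> J}"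
      using that simple_factor_bracket[OF J] by blast
    then show ?thesis
      unfolding derived_def linear_span_image[OF linear_br(1), symmetric] by (rule span_mono)
  qed
  ultimately have "lie_ideal_in br J (derived br J)"
    unfolding lie_ideal_in_def derived_def by (auto intro: subspace_span)
  moreover obtain a b where "a \<in> J" "b \<in> J" "br a b \<noteq> 0" using simple_factorD(5)[OF J] by blast
  then have "derived br J \<noteq> {0}" unfolding derived_def by (auto intro: span_base)
  ultimately show ?thesis using simple_factorD(6)[OF J] by blast
qed

lemma simple_factors_Int:
  assumes J1: "J1 \<in> simple_factors" and J2: "J2 \<in> simple_factors" and "J1 \<noteq> J2"
  shows "J1 \<inter> J2 = {0}"
proof (rule ccontr)
  assume "J1 \<inter> J2 \<noteq> {0}"
  moreover have "lie_ideal_in br J1 (J1 \<inter> J2)"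
    unfolding lie_ideal_in_def using simple_factorD[OF J1] simple_factorD[OF J2]
    by (auto intro: subspace_inter)
  ultimately have "J1 \<subseteq> J2" using simple_factorD(6)[OF J1] by blast
  then have "lie_ideal_in br J2 J1"
    unfolding lie_ideal_in_def using simple_factorD(1,2,4)[OF J1] simple_factorD(2)[OF J2] by blast
  then show False
    using simple_factorD(6)[OF J2] simple_factor_nonzero[OF J1] \<open>J1 \<noteq> J2\<close> by blast
qed

lemma simple_factors_bracket:
  assumes J1: "J1 \<in> simple_factors" and J2: "J2 \<in> simple_factors" and "J1 \<noteq> J2"
    and "a \<in> J1" "b \<in> J2"
  shows "br a b = 0"
proof -
  have "br b a \<in> J1" "br a b \<in> J2"
    using simple_factorD(4)[OF J1] simple_factorD(4)[OF J2] simple_factorD(2)[OF J1]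
      simple_factorD(2)[OF J2] assms(4,5) by blast+
  then have "br a b \<in> J1 \<inter> J2"
    using subspace_neg[OF simple_factorD(1)[OF J1]] lie_bracket_antisym[OF lie, of b a] by force
  then show ?thesis using simple_factors_Int[OF J1 J2 \<open>J1 \<noteq> J2\<close>] by blast
qed

text \<open>Since a simple factor is perfect, invariance of the Killing form reduces
  orthogonality to the vanishing of brackets.\<close>
lemma simple_factors_killing_orthogonal:
  assumes J1: "J1 \<in> simple_factors" and J2: "J2 \<in> simple_factors" and "J1 \<noteq> J2"
    and "a \<in> J1" "b \<in> J2"
  shows "killing br a b = 0"
proof -
  have "subspace {a. killing br a b = 0}"
    unfolding subspace_def
    by (auto simp: bilinear_ladd[OF bilinear_B] bilinear_lmul[OF bilinear_B]
        bilinear_lzero[OF bilinear_B])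
  moreover have "killing br (br x y) b = 0" if "x \<in> J1" "y \<in> J1" for x y
    using killing_invariant[OF lie, of x y b] simple_factors_bracket[OF J1 J2 \<open>J1 \<noteq> J2\<close> that(2) \<open>b \<in> J2\<close>]
    by (simp add: bilinear_rzero[OF bilinear_B])
  ultimately have "derived br J1 \<subseteq> {a. killing br a b = 0}"
    unfolding derived_def by (intro span_minimal) auto
  then show ?thesis using simple_factor_perfect[OF J1] \<open>a \<in> J1\<close> by blast
qed

lemma finite_simple_factors: "finite simple_factors"
proof -
  define v where "v J = (SOME x. x \<in> J \<and> x \<noteq> 0)" for J :: "'a set"
  have v: "v J \<in> J" "v J \<noteq> 0" if "J \<in> simple_factors" for J
    using someI_ex[OF simple_factor_nonzero[OF that, unfolded Bex_def]] unfolding v_def by auto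
  have "inj_on v simple_factors"
  proof (rule inj_onI, rule ccontr)
    fix J1 J2 assume J: "J1 \<in> simple_factors" "J2 \<in> simple_factors" "v J1 = v J2" "J1 \<noteq> J2"
    then have "v J1 \<in> J1 \<inter> J2" using v(1) by (metis IntI)
    then show False using simple_factors_Int[OF J(1,2,4)] v(2)[OF J(1)] by blast
  qed
  moreover have "independent (v ` simple_factors)"
  proof (rule independent_if_pairwise_orthogonal[OF bilinear_B]; intro ballI impI)
    fix x assume "x \<in> v ` simple_factors"
    then obtain J where "J \<in> simple_factors" "x = v J" by blast
    then show "killing br x x \<noteq> 0" using v simple_factorD(3) killing_neg_K by force
  next
    fix x y assume "x \<in> v ` simple_factors" "y \<in> v ` simple_factors" "x \<noteq> y"
    then obtain J1 J2 where J: "J1 \<in> simple_factors" "x = v J1" "J2 \<in> simple_factors" "y = v J2"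
      by blast
    moreover from J \<open>x \<noteq> y\<close> have "J1 \<noteq> J2" by blast
    ultimately show "killing br x y = 0" using simple_factors_killing_orthogonal v(1) by simp
  qed
  then have "finite (v ` simple_factors)" using independent_bound by blast
  ultimately show ?thesis using finite_imageD by blast
qed

lemma finite_index_spaces: "finite (index_spaces br K)"
  unfolding index_spaces_def k_factors_def using finite_simple_factors by simp

lemma subspace_lie_centre: "subspace (lie_centre br K)"
  unfolding lie_centre_def subspace_def using subspace_K
  by (auto simp: subspace_0 subspace_add subspace_scale linear_add[OF linear_br(1)]
      linear_scale[OF linear_br(1)] linear_0[OF linear_br(1)])

lemma subspace_index_spaces: "U \<in> index_spaces br K \<Longrightarrow> subspace U"
  unfolding index_spaces_def k_factors_def
  using subspace_p subspace_lie_centre simple_factorD(1) by (auto split: if_splits)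

lemma span_index_spaces: "span (\<Union>(index_spaces br K)) = UNIV"
proof -
  have "lie_centre br K \<subseteq> span (\<Union>(index_spaces br K))"
    by (cases "lie_centre br K = {0}")
      (auto simp: index_spaces_def k_factors_def span_zero intro: span_base)
  moreover have "\<Union>simple_factors \<subseteq> span (\<Union>(index_spaces br K))"
    unfolding index_spaces_def k_factors_def by (auto intro: span_base)
  ultimately have "span (lie_centre br K \<union> \<Union>simple_factors) \<subseteq> span (\<Union>(index_spaces br K))"
    by (simp add: span_minimal)
  then have "kproj br K x \<in> span (\<Union>(index_spaces br K))" for x
    using kideal_subset_span[OF kideal_K] kproj(1) by blast
  moreover have "x - kproj br K x \<in> span (\<Union>(index_spaces br K))" for x
    using kproj(2) unfolding index_spaces_def by (auto intro: span_base)
  ultimately have "kproj br K x + (x - kproj br K x) \<in> span (\<Union>(index_spaces br K))" for x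
    by (rule span_add)
  then show ?thesis by auto
qed


lemma bilinear_nr_metric: "bilinear (nr_metric br K c)"
  unfolding nr_metric_def[abs_def]
  by (intro bilinear_weighted_sum bilinear_Qrestr subspace_index_spaces)

lemma nr_metric_anisotropic:
  assumes c: "in_MK br K c"
  shows "anisotropic_form (nr_metric br K c)"
proof
  show "bilinear (nr_metric br K c)" by (rule bilinear_nr_metric)
  fix v assume "nr_metric br K c v v = 0"
  then have "(\<Sum>U\<in>index_spaces br K. c U * Qrestr br K U v v) = 0"
    unfolding nr_metric_def .
  moreover have "0 \<le> c U * Qrestr br K U v v" if "U \<in> index_spaces br K" for U
    using c that Qrestr_nonneg unfolding in_MK_def by (simp add: less_imp_le)
  ultimately have "c U * Qrestr br K U v v = 0" if "U \<in> index_spaces br K" for U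
    using sum_nonneg_eq_0_iff[OF finite_index_spaces, of "\<lambda>U. c U * Qrestr br K U v v"] that
    by simp
  then have Q0: "Qrestr br K U v v = 0" if "U \<in> index_spaces br K" for U
    using c that unfolding in_MK_def by force
  have "span (\<Union>(index_spaces br K)) \<subseteq> {z. cartanQ br K v z = 0}"
  proof (rule span_minimal)
    show "subspace {z. cartanQ br K v z = 0}"
      using subspace_right_kernel[OF bilinear_cartanQ, of "{v}"] by simp
    show "\<Union>(index_spaces br K) \<subseteq> {z. cartanQ br K v z = 0}"
    proof
      fix z assume "z \<in> \<Union>(index_spaces br K)"
      then obtain U where U: "U \<in> index_spaces br K" "z \<in> U" by blast
      have "cartanQ br K z v = 0"
        by (rule Qrestr_eq_0_orthogonal[OF subspace_index_spaces[OF U(1)] Q0[OF U(1)] U(2)])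
      then show "z \<in> {z. cartanQ br K v z = 0}" using cartanQ_commute[of v z] by simp
    qed
  qed
  then have "cartanQ br K v v = 0" using span_index_spaces by blast
  then show "v = 0" using cartanQ_pos[of v] by fastforce
qed

lemma in_MT0_scale:
  assumes T: "bilinear T" and c: "in_MT0 br K T c" and "s > 0"
  shows "in_MT0 br K T (\<lambda>U. s * c U)"
proof -
  have "in_MK br K c" "metric_trace (nr_metric br K c) T = 0"
    using c by (simp_all add: in_MT0_def)
  then show ?thesis
    using anisotropic_form.metric_trace_scale[OF nr_metric_anisotropic T, of c s] \<open>s > 0\<close>
    unfolding in_MT0_def in_MK_def nr_metric_scale by simp
qed

lemma scalar_curv_nr_metric_scale:
  assumes "in_MK br K c" "s > 0"
  shows "scalar_curv br (nr_metric br K (\<lambda>U. s * c U)) = scalar_curv br (nr_metric br K c) / s"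
  unfolding nr_metric_scale
  using anisotropic_form.scalar_curv_scale[OF nr_metric_anisotropic[OF assms(1)] bilinear_br] assms(2)
  by simp

lemma critical_scaling_derivative:
  assumes T: "bilinear T" and crit: "critical_S_MT0 br K T c"
  shows "((\<lambda>t. scalar_curv br (nr_metric br K (\<lambda>U. (1 + t) * c U))) has_real_derivative 0) (at 0)"
proof -
  have "in_MT0 br K T c" using crit by (simp add: critical_S_MT0_def)
  then have "in_MT0 br K T (\<lambda>U. (1 + t) * c U)" if "\<bar>t\<bar> < 1" for t
    using in_MT0_scale[OF T] that by simp
  moreover have "(\<lambda>t. (1 + t) * c U) differentiable (at 0)" for U :: "'a set"
    using DERIV_cmult_right[OF DERIV_add[OF DERIV_const DERIV_ident, of 1 0], of "c U"]
    by (auto simp: real_differentiable_def)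
  ultimately show ?thesis
    using crit[unfolded critical_S_MT0_def, THEN conjunct2,
        THEN spec[where x="\<lambda>t U. (1 + t) * c U"], THEN spec[where x=1]]
    by simp
qed

end

theorem proposition5p7:
  fixes br :: "'a::euclidean_space \<Rightarrow> 'a \<Rightarrow> 'a"
    and K :: "'a set"
    and T :: "'a \<Rightarrow> 'a \<Rightarrow> real"
    and c :: "'a set \<Rightarrow> real"
  assumes "simple_lie_algebra br"
    and "noncompact_lie_algebra br"
    and "cartan_subalgebra_k br K"
    and "bilinear T" and "\<forall>x y. T x y = T y x"
    and "critical_S_MT0 br K T c"
  shows "scalar_curv br (nr_metric br K c) = 0"
proof -
  interpret cartan_decomposition br K
    using assms(1,3) by unfold_locales (simp_all add: simple_lie_algebra_def)
  define S where "S = scalar_curv br (nr_metric br K c)"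
  have "in_MK br K c" using assms(6) by (simp add: critical_S_MT0_def in_MT0_def)
  then have scaled: "scalar_curv br (nr_metric br K (\<lambda>U. (1 + t) * c U)) = S / (1 + t)"
    if "t > -1" for t
    using scalar_curv_nr_metric_scale that unfolding S_def by simp
  have "((\<lambda>t. S / (1 + t)) has_real_derivative - S) (at 0)"
    by (auto intro!: derivative_eq_intros)
  then have "((\<lambda>t. scalar_curv br (nr_metric br K (\<lambda>U. (1 + t) * c U))) has_real_derivative - S) (at 0)"
    by (rule has_field_derivative_transform_within_open[where S="{-1<..}"]) (simp_all add: scaled)
  then have "- S = 0"
    using critical_scaling_derivative[OF assms(4,6)] by (rule DERIV_unique)
  then show ?thesis unfolding S_def by simp
qed

end
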